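(* (1) There exist a hedonic diversity game in which all agents have strict preferences and an initial partition $\pi_0$ such that no finite sequence of IS deviations starting from $\pi_0$ ends in an individually stable partition. (2) The same holds for some hedonic diversity game in which all agents have naturally single-peaked preferences (with indifferences allowed) and some initial partition.
   Context: A hedonic diversity game (HDG) has agent set $N=R\cup B$ partitioned into red agents $R$ and blue agents $B$, $|N|=n$. Each agent $i$ has a weak order $\succsim_i^F$ over fractions $\{p/q: p\in\{0,\dots,|R|\},q\in[n]\}$, and evaluates a coalition $C\ni i$ by the fraction $|R\cap C|/|C|$. Strict: the orders are linear. Naturally single-peaked: for each agent $i$ and fractions $x,y,z$ with $x>y>z$ or $z>y>x$, $x\succ_i^F y$ implies $y\succsim_i^F z$. An IS deviation of agent $i$ from partition $\pi$ to $\pi'$ is a move of $i$ alone from $\pi(i)$ into another coalition of $\pi$ or into a new singleton such that $\pi'(i)\succ_i\pi(i)$ and $\pi'(j)\succsim_j\pi(j)$ for all $j\in\pi'(i)\setminus\{i\}$. A partition is individually stable (IS) if no IS deviation is possible from it. *)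

theory Defs
  imports Complex_Main
begin

text \<open>A hedonic diversity game is given by a finite nonempty agent set N, the red agents
  R \<subseteq> N (blue agents are N - R), and for each agent i a weak order pr i over fractions:
  pr i x y means x is weakly preferred to y by agent i.\<close>

definition fractions :: "'a set \<Rightarrow> 'a set \<Rightarrow> rat set" where
  "fractions N R = {of_nat p / of_nat q | p q. p \<le> card R \<and> 1 \<le> q \<and> q \<le> card N}"

definition frac :: "'a set \<Rightarrow> 'a set \<Rightarrow> rat" where
  "frac R C = of_nat (card (R \<inter> C)) / of_nat (card C)"

definition strict_pref :: "('a \<Rightarrow> rat \<Rightarrow> rat \<Rightarrow> bool) \<Rightarrow> 'a \<Rightarrow> rat \<Rightarrow> rat \<Rightarrow> bool" where
  "strict_pref pr i x y \<longleftrightarrow> pr i x y \<and> \<not> pr i y x"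

definition weak_order_on :: "rat set \<Rightarrow> (rat \<Rightarrow> rat \<Rightarrow> bool) \<Rightarrow> bool" where
  "weak_order_on F r \<longleftrightarrow>
     (\<forall>x\<in>F. \<forall>y\<in>F. r x y \<or> r y x) \<and>
     (\<forall>x\<in>F. \<forall>y\<in>F. \<forall>z\<in>F. r x y \<longrightarrow> r y z \<longrightarrow> r x z)"

definition hdg :: "'a set \<Rightarrow> 'a set \<Rightarrow> ('a \<Rightarrow> rat \<Rightarrow> rat \<Rightarrow> bool) \<Rightarrow> bool" where
  "hdg N R pr \<longleftrightarrow> finite N \<and> N \<noteq> {} \<and> R \<subseteq> N \<and>
     (\<forall>i\<in>N. weak_order_on (fractions N R) (pr i))"

definition strict_prefs :: "'a set \<Rightarrow> 'a set \<Rightarrow> ('a \<Rightarrow> rat \<Rightarrow> rat \<Rightarrow> bool) \<Rightarrow> bool" where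
  "strict_prefs N R pr \<longleftrightarrow>
     (\<forall>i\<in>N. \<forall>x\<in>fractions N R. \<forall>y\<in>fractions N R. pr i x y \<and> pr i y x \<longrightarrow> x = y)"

definition naturally_single_peaked :: "'a set \<Rightarrow> 'a set \<Rightarrow> ('a \<Rightarrow> rat \<Rightarrow> rat \<Rightarrow> bool) \<Rightarrow> bool" where
  "naturally_single_peaked N R pr \<longleftrightarrow>
     (\<forall>i\<in>N. \<forall>x\<in>fractions N R. \<forall>y\<in>fractions N R. \<forall>z\<in>fractions N R.
        ((x > y \<and> y > z) \<or> (z > y \<and> y > x)) \<longrightarrow> strict_pref pr i x y \<longrightarrow> pr i y z)"

definition is_partition :: "'a set \<Rightarrow> 'a set set \<Rightarrow> bool" where
  "is_partition N \<pi> \<longleftrightarrow> (\<forall>C\<in>\<pi>. C \<noteq> {}) \<and> \<Union>\<pi> = N \<and>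
     (\<forall>C\<in>\<pi>. \<forall>D\<in>\<pi>. C \<noteq> D \<longrightarrow> C \<inter> D = {})"

text \<open>An IS deviation: agent i leaves its coalition C and joins T (a coalition of the
  partition other than C, or the empty set = a new singleton).\<close>
definition IS_dev :: "'a set \<Rightarrow> 'a set \<Rightarrow> ('a \<Rightarrow> rat \<Rightarrow> rat \<Rightarrow> bool) \<Rightarrow> 'a set set \<Rightarrow> 'a set set \<Rightarrow> bool" where
  "IS_dev N R pr \<pi> \<pi>' \<longleftrightarrow> is_partition N \<pi> \<and>
     (\<exists>i C T. C \<in> \<pi> \<and> i \<in> C \<and> (T \<in> \<pi> \<or> T = {}) \<and> T \<noteq> C \<and>
        \<pi>' = (\<pi> - {C, T}) \<union> (if C - {i} = {} then {} else {C - {i}}) \<union> {insert i T} \<and>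
        strict_pref pr i (frac R (insert i T)) (frac R C) \<and>
        (\<forall>j\<in>T. pr j (frac R (insert i T)) (frac R T)))"

definition individually_stable :: "'a set \<Rightarrow> 'a set \<Rightarrow> ('a \<Rightarrow> rat \<Rightarrow> rat \<Rightarrow> bool) \<Rightarrow> 'a set set \<Rightarrow> bool" where
  "individually_stable N R pr \<pi> \<longleftrightarrow> is_partition N \<pi> \<and> \<not> (\<exists>\<pi>'. IS_dev N R pr \<pi> \<pi>')"

end

theory Submission
  imports Defs
begin

text \<open>Both counterexamples have seven agents, three of them red. For each we exhibit a set of
  eight partitions that contains the initial partition, is closed under IS deviations, and in
  which every partition admits an IS deviation: every sequence of IS deviations from the initial
  partition stays in this set, so none ends in an individually stable partition.\<close>

definition IS_successors :: "'a set \<Rightarrow> ('a \<Rightarrow> rat \<Rightarrow> rat \<Rightarrow> bool) \<Rightarrow> 'a set set \<Rightarrow> 'a set set set" where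
  "IS_successors R pr \<pi> = (\<Union>C\<in>\<pi>. \<Union>i\<in>C. \<Union>T\<in>insert {} \<pi>.
     (if T \<noteq> C \<and> strict_pref pr i (frac R (insert i T)) (frac R C) \<and>
         (\<forall>j\<in>T. pr j (frac R (insert i T)) (frac R T))
      then {(\<pi> - {C, T}) \<union> (if C - {i} = {} then {} else {C - {i}}) \<union> {insert i T}} else {}))"

lemma IS_dev_iff_IS_successors:
  "IS_dev N R pr \<pi> \<pi>' \<longleftrightarrow> is_partition N \<pi> \<and> \<pi>' \<in> IS_successors R pr \<pi>"
  unfolding IS_dev_def IS_successors_def by (auto split: if_splits)

definition IS_trap :: "'a set \<Rightarrow> 'a set \<Rightarrow> ('a \<Rightarrow> rat \<Rightarrow> rat \<Rightarrow> bool) \<Rightarrow> 'a set set set \<Rightarrow> bool" where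
  "IS_trap N R pr S \<longleftrightarrow>
     (\<forall>\<pi>\<in>S. is_partition N \<pi> \<and> IS_successors R pr \<pi> \<noteq> {} \<and> IS_successors R pr \<pi> \<subseteq> S)"

lemma IS_trap_reachable:
  assumes "IS_trap N R pr S" and "\<pi>0 \<in> S" and "(IS_dev N R pr)\<^sup>*\<^sup>* \<pi>0 \<pi>"
  shows "\<pi> \<in> S"
  using assms(3,2)
proof induction
  case (step \<pi>' \<pi>'')
  then show ?case
    using assms(1) unfolding IS_trap_def IS_dev_iff_IS_successors by blast
qed

lemma not_individually_stable_if_IS_trap:
  assumes "IS_trap N R pr S" and "\<pi> \<in> S"
  shows "\<not> individually_stable N R pr \<pi>"
  using assms unfolding IS_trap_def individually_stable_def IS_dev_iff_IS_successors by blast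

lemma no_individually_stable_reachable_from_IS_trap:
  assumes "IS_trap N R pr S" and "\<pi>0 \<in> S"
  shows "\<forall>\<pi>. (IS_dev N R pr)\<^sup>*\<^sup>* \<pi>0 \<pi> \<longrightarrow> \<not> individually_stable N R pr \<pi>"
  using assms IS_trap_reachable not_individually_stable_if_IS_trap by blast

text \<open>A weak order given by its indifference classes, best first; fractions not listed are
  ranked below all listed ones.\<close>

definition rank :: "'b list list \<Rightarrow> 'b \<Rightarrow> nat" where
  "rank L x = length (takeWhile (\<lambda>c. x \<notin> set c) L)"

definition ranking_pref :: "('a \<Rightarrow> rat list list) \<Rightarrow> 'a \<Rightarrow> rat \<Rightarrow> rat \<Rightarrow> bool" where
  "ranking_pref L i x y \<longleftrightarrow> rank (L i) x \<le> rank (L i) y"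

lemma hdg_ranking_pref:
  assumes "finite N" and "N \<noteq> {}" and "R \<subseteq> N"
  shows "hdg N R (ranking_pref L)"
  using assms unfolding hdg_def weak_order_on_def ranking_pref_def by auto

lemma rank_class:
  assumes "x \<in> set (concat L)"
  shows "rank L x < length L" and "x \<in> set (L ! rank L x)"
proof -
  show less: "rank L x < length L"
    using assms unfolding rank_def by (induction L) auto
  show "x \<in> set (L ! rank L x)"
    using nth_length_takeWhile[OF less[unfolded rank_def]] unfolding rank_def by simp
qed

lemma rank_inj_on_singleton_classes:
  assumes "\<forall>c\<in>set L. length c \<le> 1"
  shows "inj_on (rank L) (set (concat L))"
proof (rule inj_onI)
  fix x y assume x: "x \<in> set (concat L)" and y: "y \<in> set (concat L)" and eq: "rank L x = rank L y"
  define c where "c = L ! rank L x"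
  have "c \<in> set L" using rank_class(1)[OF x] unfolding c_def by simp
  then have "length c \<le> 1" using assms by blast
  moreover have "x \<in> set c" "y \<in> set c"
    using rank_class(2)[OF x] rank_class(2)[OF y] eq unfolding c_def by simp_all
  ultimately show "x = y" by (cases c) auto
qed

lemma strict_prefs_ranking_pref:
  assumes "\<And>i. i \<in> N \<Longrightarrow> fractions N R \<subseteq> set (concat (L i)) \<and> (\<forall>c\<in>set (L i). length c \<le> 1)"
  shows "strict_prefs N R (ranking_pref L)"
  unfolding strict_prefs_def ranking_pref_def
proof (intro ballI impI)
  fix i x y assume "i \<in> N" "x \<in> fractions N R" "y \<in> fractions N R"
    and "rank (L i) x \<le> rank (L i) y \<and> rank (L i) y \<le> rank (L i) x"
  then show "x = y"
    using assms rank_inj_on_singleton_classes by (metis inj_onD le_antisym subsetD)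
qed

text \<open>Natural single-peakedness can only fail at a fraction that is strictly beaten on both
  sides.\<close>

lemma naturally_single_peakedI:
  assumes "\<And>i y. i \<in> N \<Longrightarrow> y \<in> fractions N R \<Longrightarrow>
    (\<forall>x\<in>fractions N R. x < y \<longrightarrow> pr i y x) \<or> (\<forall>x\<in>fractions N R. y < x \<longrightarrow> pr i y x)"
  shows "naturally_single_peaked N R pr"
  unfolding naturally_single_peaked_def strict_pref_def
proof (intro ballI impI)
  fix i x y z assume "i \<in> N" "x \<in> fractions N R" "y \<in> fractions N R" "z \<in> fractions N R"
    and "x > y \<and> y > z \<or> z > y \<and> y > x" and "pr i x y \<and> \<not> pr i y x"
  then show "pr i y z" using assms by blast
qed

lemma fractions_eq_image:
  "fractions N R = (\<lambda>(p, q). of_nat p / of_nat q) ` ({0..card R} \<times> {1..card N})"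
  unfolding fractions_def image_def by force

abbreviation agents :: "nat set" where
  "agents \<equiv> {0, 1, 2, 3, 4, 5, 6}"

abbreviation reds :: "nat set" where
  "reds \<equiv> {0, 1, 2}"

lemma fractions_agents_reds:
  "fractions agents reds =
     set [0, 1/7, 1/6, 1/5, 1/4, 2/7, 1/3, 2/5, 3/7, 1/2, 3/5, 2/3, 3/4, 1, 3/2, 2, 3]"
  unfolding fractions_eq_image by code_simp

lemma hdg_agents_reds: "hdg agents reds (ranking_pref L)"
  by (rule hdg_ranking_pref) auto

definition initial_partition :: "nat set set" where
  "initial_partition = {{0, 1}, {2, 3, 4, 5, 6}}"

lemma is_partition_initial_partition: "is_partition agents initial_partition"
  unfolding is_partition_def initial_partition_def by auto

definition strict_order :: "nat \<Rightarrow> rat list" where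
  "strict_order i =
    (if i = 0 then [3/7, 3/5, 3/4, 2/5, 1/4, 1/5, 1/3, 2/3, 1/6, 1/2, 1, 0, 3, 2, 3/2, 1/7, 2/7]
     else if i = 1 then [3/5, 1/5, 3/4, 1/3, 2/7, 1/4, 2/3, 1/2, 3, 3/7, 1, 3/2, 1/6, 1/7, 2/5, 2, 0]
     else if i = 2 then [3/7, 3/2, 1/6, 0, 2/7, 3/5, 2/5, 1/5, 1/4, 1/3, 1/7, 1/2, 1, 2/3, 2, 3/4, 3]
     else if i = 3 then [2, 3/7, 3/5, 1/6, 3/4, 3/2, 2/3, 1/5, 1/4, 0, 1/7, 2/5, 1, 1/2, 1/3, 2/7, 3]
     else if i = 4 then [1/6, 3/7, 3/4, 3, 2/5, 1/5, 1/7, 1/4, 1/2, 3/2, 1, 2/3, 1/3, 0, 2, 3/5, 2/7]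
     else if i = 5 then [3/7, 2/7, 3/4, 2, 3/2, 1/5, 2/5, 2/3, 1/4, 3/5, 1/2, 1/3, 1, 1/7, 3, 1/6, 0]
     else [1/7, 1, 2/7, 1/6, 1/3, 1/5, 2/3, 1/2, 3/5, 3/2, 2/5, 2, 3/7, 1/4, 3/4, 0, 3])"

definition strict_ranking :: "nat \<Rightarrow> rat list list" where
  "strict_ranking i = map (\<lambda>x. [x]) (strict_order i)"

definition strict_trap :: "nat set set set" where
  "strict_trap =
    {{{0, 1}, {2, 3, 4, 5, 6}}, {{0, 2, 4, 5, 6}, {1, 3}}, {{0, 1, 3}, {2, 4, 5, 6}},
     {{0, 2, 4, 5, 6}, {1}, {3}}, {{0, 4, 5, 6}, {1, 2}, {3}}, {{0, 1, 6}, {2, 3, 4, 5}},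
     {{0, 1, 6}, {2, 4, 5}, {3}}, {{0, 2, 4, 5}, {1, 6}, {3}}}"

lemma strict_prefs_strict_ranking: "strict_prefs agents reds (ranking_pref strict_ranking)"
proof (rule strict_prefs_ranking_pref)
  have "\<forall>i\<in>agents. fractions agents reds \<subseteq> set (strict_order i)"
    unfolding fractions_agents_reds strict_order_def by code_simp
  then show "fractions agents reds \<subseteq> set (concat (strict_ranking i))
      \<and> (\<forall>c\<in>set (strict_ranking i). length c \<le> 1)" if "i \<in> agents" for i
    using that unfolding strict_ranking_def by auto
qed

lemma IS_trap_strict_trap: "IS_trap agents reds (ranking_pref strict_ranking) strict_trap"
  unfolding IS_trap_def strict_trap_def IS_successors_def ranking_pref_def rank_def
    strict_ranking_def strict_order_def is_partition_def frac_def strict_pref_def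
  by code_simp

definition single_peaked_ranking :: "nat \<Rightarrow> rat list list" where
  "single_peaked_ranking i =
    (if i = 0 then [[1/3], [2/5, 3/7, 1/2, 3/5, 2/3, 3/4], [1/5, 1/4, 2/7, 1], [1/6], [1/7], [3/2], [2], [0], [3]]
     else if i = 1 then [[3/5], [2/3, 3/4], [2/7, 1/3, 2/5, 3/7, 1/2], [1/4], [1], [1/5], [3/2], [2], [3], [1/6], [1/7], [0]]
     else if i = 2 then [[2/5], [3/7, 1/2], [3/5, 2/3], [2/7, 1/3, 3/4], [1/5, 1/4, 1], [3/2], [2], [1/6], [1/7], [3], [0]]
     else if i = 3 then [[3/5], [0, 1/7, 1/6, 1/5, 1/4, 2/7, 1/3, 2/5, 3/7, 1/2, 2/3, 3/4], [1], [3/2], [2], [3]]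
     else if i = 4 then [[1/5, 1/4, 2/7], [1/3], [0, 1/7, 1/6, 2/5, 3/7, 1/2, 3/5, 2/3], [3/4], [1], [3/2], [2], [3]]
     else if i = 5 then [[3/5, 2/3, 3/4], [0, 1/7, 1/6, 1/5, 1/4, 2/7, 1/3, 2/5, 3/7, 1/2], [1], [3/2], [2], [3]]
     else [[2/5, 3/7], [2/7, 1/3], [0, 1/7, 1/6, 1/5, 1/4, 1/2, 3/5, 2/3, 3/4], [1], [3/2], [2], [3]])"

definition single_peaked_trap :: "nat set set set" where
  "single_peaked_trap =
    {{{0, 1}, {2, 3, 4, 5, 6}}, {{0, 4}, {1, 2, 3, 5, 6}}, {{0, 1, 4}, {2, 3, 5, 6}},
     {{0, 2, 4}, {1, 3, 5, 6}}, {{0, 1, 5}, {2, 3, 4, 6}}, {{0, 1, 2, 5}, {3, 4, 6}},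
     {{0, 4, 6}, {1, 2, 3, 5}}, {{0, 1, 2, 3, 5}, {4, 6}}}"

lemma naturally_single_peaked_single_peaked_ranking:
  "naturally_single_peaked agents reds (ranking_pref single_peaked_ranking)"
proof (rule naturally_single_peakedI)
  have "\<forall>i\<in>agents. \<forall>y\<in>fractions agents reds.
      (\<forall>x\<in>fractions agents reds. x < y \<longrightarrow> ranking_pref single_peaked_ranking i y x) \<or>
      (\<forall>x\<in>fractions agents reds. y < x \<longrightarrow> ranking_pref single_peaked_ranking i y x)"
    unfolding fractions_agents_reds ranking_pref_def rank_def single_peaked_ranking_def
    by code_simp
  then show "(\<forall>x\<in>fractions agents reds. x < y \<longrightarrow> ranking_pref single_peaked_ranking i y x) \<or>
      (\<forall>x\<in>fractions agents reds. y < x \<longrightarrow> ranking_pref single_peaked_ranking i y x)"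
    if "i \<in> agents" and "y \<in> fractions agents reds" for i y
    using that by blast
qed

lemma IS_trap_single_peaked_trap:
  "IS_trap agents reds (ranking_pref single_peaked_ranking) single_peaked_trap"
  unfolding IS_trap_def single_peaked_trap_def IS_successors_def ranking_pref_def rank_def
    single_peaked_ranking_def is_partition_def frac_def strict_pref_def
  by code_simp

theorem proposition4p3:
  shows "(\<exists>(N::nat set) R pr \<pi>0. hdg N R pr \<and> strict_prefs N R pr \<and> is_partition N \<pi>0 \<and>
            (\<forall>\<pi>. (IS_dev N R pr)\<^sup>*\<^sup>* \<pi>0 \<pi> \<longrightarrow> \<not> individually_stable N R pr \<pi>))
       \<and> (\<exists>(N::nat set) R pr \<pi>0. hdg N R pr \<and> naturally_single_peaked N R pr \<and> is_partition N \<pi>0 \<and>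
            (\<forall>\<pi>. (IS_dev N R pr)\<^sup>*\<^sup>* \<pi>0 \<pi> \<longrightarrow> \<not> individually_stable N R pr \<pi>))"
proof
  have "initial_partition \<in> strict_trap"
    unfolding initial_partition_def strict_trap_def by simp
  then show "\<exists>(N::nat set) R pr \<pi>0. hdg N R pr \<and> strict_prefs N R pr \<and> is_partition N \<pi>0 \<and>
      (\<forall>\<pi>. (IS_dev N R pr)\<^sup>*\<^sup>* \<pi>0 \<pi> \<longrightarrow> \<not> individually_stable N R pr \<pi>)"
    using hdg_agents_reds strict_prefs_strict_ranking is_partition_initial_partition
      no_individually_stable_reachable_from_IS_trap[OF IS_trap_strict_trap] by blast
  have "initial_partition \<in> single_peaked_trap"
    unfolding initial_partition_def single_peaked_trap_def by simp
  then show "\<exists>(N::nat set) R pr \<pi>0. hdg N R pr \<and> naturally_single_peaked N R pr \<and>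
      is_partition N \<pi>0 \<and> (\<forall>\<pi>. (IS_dev N R pr)\<^sup>*\<^sup>* \<pi>0 \<pi> \<longrightarrow> \<not> individually_stable N R pr \<pi>)"
    using hdg_agents_reds naturally_single_peaked_single_peaked_ranking
      is_partition_initial_partition
      no_individually_stable_reachable_from_IS_trap[OF IS_trap_single_peaked_trap] by blast
qed

end
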